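(* Let $\{\omega_n:n\in\mathbb{N}_0\}$ and $\{\tilde\omega_n:n\in\mathbb{N}_0\}$ be the wavelet packets (defined in the context) with respect to a pair of biorthogonal scaling functions $\omega_0=\varphi$ and $\tilde\omega_0=\tilde\varphi$. Then $$\langle\omega_\ell(\cdot),\tilde\omega_n(\cdot-u(k))\rangle=\delta_{\ell,n}\,\delta_{0,k}\quad\text{for all }\ell,n,k\in\mathbb{N}_0.$$
   Context: $K$ is a local field of positive characteristic $p$ with ring of integers $\mathfrak{D}=\{|x|\le1\}$, prime ideal $\mathfrak{B}=\mathfrak{p}\mathfrak{D}$ ($\mathfrak{p}$ a prime element), $q=|\mathfrak{D}/\mathfrak{B}|=p^c$, Haar measure normalized with $\mathfrak{D}$ of measure $1$. Choose $\zeta_0=1,\zeta_1,\dots,\zeta_{c-1}\in\mathfrak{D}$ with $|\zeta_j|=1$ whose images form a basis of $\mathfrak{D}/\mathfrak{B}\cong GF(q)$ over $GF(p)$; for $0\le n<q$, $n=a_0+a_1p+\dots+a_{c-1}p^{c-1}$ ($0\le a_k<p$), put $u(n)=(a_0+a_1\zeta_1+\dots+a_{c-1}\zeta_{c-1})\mathfrak{p}^{-1}$, and for $n=b_0+b_1q+\dots+b_sq^s$ ($0\le b_k<q$), $u(n)=u(b_0)+u(b_1)\mathfrak{p}^{-1}+\dots+u(b_s)\mathfrak{p}^{-s}$. $\chi$ is a character of $(K,+)$ trivial on $\mathfrak{D}$, non-trivial on $\mathfrak{B}^{-1}$, $\chi_k(x)=\chi(u(k)x)$; $\hat f(\xi)=\int_Kf(x)\overline{\chi(\xi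 x)}dx$. Let $\varphi,\tilde\varphi\in L^2(K)$ and $\psi_\ell,\tilde\psi_\ell\in L^2(K)$ ($1\le\ell\le q-1$) satisfy $\varphi(x)=\sqrt q\sum_{k\in\mathbb{N}_0}a_k^0\varphi(\mathfrak{p}^{-1}x-u(k))$, $\psi_\ell(x)=\sqrt q\sum_ka_k^\ell\varphi(\mathfrak{p}^{-1}x-u(k))$, and the same with tildes (coefficients $\tilde a_k^s$), all coefficient sequences in $\ell^2(\mathbb{N}_0)$; masks $m_s(\xi)=\frac1{\sqrt q}\sum_ka_k^s\overline{\chi_k(\xi)}$, $\tilde m_s$ analogously ($0\le s\le q-1$). $\varphi$ is the scaling function of a multiresolution analysis of $L^2(K)$ and $\{\psi_\ell(\cdot-u(k))\}$ is a Riesz basis of a direct complement $W_0$ of $V_0$ in $V_1$. Biorthogonality: for all $k\in\mathbb{N}_0$, $1\le\ell,\ell'\le q-1$: $\langle\varphi,\tilde\varphi(\cdot-u(k))\rangle=\delta_{0,k}$, $\langle\varphi,\tilde\psi_\ell(\cdot-u(k))\rangle=0$, $\langle\tilde\varphi,\psi_\ell(\cdot-u(k))\rangle=0$, $\langle\psi_\ell,\tilde\psi_{\ell'}(\cdot-u(k))\rangle=\delta_{\ell,\ell'}\delta_{0,k}$. Wavelet packets: $\omega_0=\varphi$, $\tilde\omega_0=\tilde\varphi$, and for $n=qr+s$ with $r\in\mathbb{N}_0$, $0\le s\le q-1$: $\omega_n(x)=\sqrt q\sum_{k\in\mathbb{N}_0}a_k^s\omega_r(\mathfrak{p}^{-1}x-u(k))$,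 $\tilde\omega_n(x)=\sqrt q\sum_k\tilde a_k^s\tilde\omega_r(\mathfrak{p}^{-1}x-u(k))$. *)

theory Defs
  imports "HOL-Analysis.Analysis"
begin

text \<open>K is modelled as an abstract field type 'k with an absolute value absv.
 local_field_pc absv p: absv is a non-archimedean absolute value, non-trivial,
 K has characteristic p (prime), and the ring of integers D = {|x| <= 1} is
 (sequentially) compact in the metric |x - y|, i.e. K is a non-discrete locally
 compact field of characteristic p.\<close>

definition local_field_pc :: "('k::field \<Rightarrow> real) \<Rightarrow> nat \<Rightarrow> bool" where
  "local_field_pc absv p \<longleftrightarrow>
     prime p \<and> of_nat p = (0::'k) \<and>
     (\<forall>x. absv x \<ge> 0) \<and> (\<forall>x. absv x = 0 \<longleftrightarrow> x = 0) \<and>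
     (\<forall>x y. absv (x * y) = absv x * absv y) \<and>
     (\<forall>x y. absv (x + y) \<le> max (absv x) (absv y)) \<and>
     (\<exists>x. 0 < absv x \<and> absv x < 1) \<and>
     (\<forall>s::nat \<Rightarrow> 'k. (\<forall>n. absv (s n) \<le> 1) \<longrightarrow>
        (\<exists>r l. strict_mono r \<and> absv l \<le> 1 \<and> (\<lambda>n. absv (s (r n) - l)) \<longlonglongrightarrow> 0))"

text \<open>pr is a prime element (B = pr D), absv normalised so that |pr| = 1/q.\<close>
definition prime_element :: "('k::field \<Rightarrow> real) \<Rightarrow> nat \<Rightarrow> 'k \<Rightarrow> bool" where
  "prime_element absv q pr \<longleftrightarrow>
     0 < absv pr \<and> absv pr < 1 \<and> (\<forall>x. absv x < 1 \<longrightarrow> absv x \<le> absv pr) \<and>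
     absv pr = inverse (real q)"

definition digits :: "nat \<Rightarrow> nat \<Rightarrow> (nat \<Rightarrow> nat) set" where
  "digits p c = {a. (\<forall>k<c. a k < p) \<and> (\<forall>k\<ge>c. a k = 0)}"

text \<open>zeta_0 = 1, zeta_1, ..., zeta_{c-1} units of D whose images form a basis of
 D/B over GF(p): every residue class of D has exactly one representative
 a_0 zeta_0 + ... + a_{c-1} zeta_{c-1} with 0 <= a_k < p.\<close>
definition residue_basis :: "('k::field \<Rightarrow> real) \<Rightarrow> nat \<Rightarrow> nat \<Rightarrow> (nat \<Rightarrow> 'k) \<Rightarrow> bool" where
  "residue_basis absv p c zeta \<longleftrightarrow>
     zeta 0 = 1 \<and> (\<forall>j<c. absv (zeta j) = 1) \<and>
     (\<forall>x. absv x \<le> 1 \<longrightarrow>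
        (\<exists>!a. a \<in> digits p c \<and> absv (x - (\<Sum>k<c. of_nat (a k) * zeta k)) < 1))"

definition u0 :: "'k::field \<Rightarrow> (nat \<Rightarrow> 'k) \<Rightarrow> nat \<Rightarrow> nat \<Rightarrow> nat \<Rightarrow> 'k" where
  "u0 pr zeta p c n = (\<Sum>k<c. of_nat ((n div p ^ k) mod p) * zeta k) * inverse pr"

definition uK :: "'k::field \<Rightarrow> (nat \<Rightarrow> 'k) \<Rightarrow> nat \<Rightarrow> nat \<Rightarrow> nat \<Rightarrow> 'k" where
  "uK pr zeta p c n =
     (\<Sum>i\<le>n. u0 pr zeta p c ((n div (p ^ c) ^ i) mod (p ^ c)) * (inverse pr) ^ i)"

definition haar_normalized :: "('k::field \<Rightarrow> real) \<Rightarrow> 'k measure \<Rightarrow> bool" where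
  "haar_normalized absv M \<longleftrightarrow>
     space M = UNIV \<and>
     sets M = sigma_sets UNIV {{y. absv (y - x) < r} | x r. True} \<and>
     (\<forall>A\<in>sets M. \<forall>x. (\<lambda>y. x + y) ` A \<in> sets M \<and> emeasure M ((\<lambda>y. x + y) ` A) = emeasure M A) \<and>
     emeasure M {x. absv x \<le> 1} = 1"

definition L2 :: "'k measure \<Rightarrow> ('k \<Rightarrow> complex) set" where
  "L2 M = {f. f \<in> borel_measurable M \<and> integrable M (\<lambda>x. (cmod (f x))\<^sup>2)}"

definition L2norm :: "'k measure \<Rightarrow> ('k \<Rightarrow> complex) \<Rightarrow> real" where
  "L2norm M f = sqrt (LINT x|M. (cmod (f x))\<^sup>2)"

definition L2inner :: "'k measure \<Rightarrow> ('k \<Rightarrow> complex) \<Rightarrow> ('k \<Rightarrow> complex) \<Rightarrow> complex" where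
  "L2inner M f g = (LINT x|M. f x * cnj (g x))"

definition L2_series :: "'k measure \<Rightarrow> ('k \<Rightarrow> complex) \<Rightarrow> (nat \<Rightarrow> complex) \<Rightarrow> (nat \<Rightarrow> 'k \<Rightarrow> complex) \<Rightarrow> bool" where
  "L2_series M f c g \<longleftrightarrow> f \<in> L2 M \<and> (\<forall>k. g k \<in> L2 M) \<and>
     (\<lambda>N. L2norm M (\<lambda>x. f x - (\<Sum>k<N. c k * g k x))) \<longlonglongrightarrow> 0"

text \<open>Closed linear subspace of L^2(K) (as a set of representatives, closed under
 modification on null sets).\<close>
definition L2_subspace :: "'k measure \<Rightarrow> ('k \<Rightarrow> complex) set \<Rightarrow> bool" where
  "L2_subspace M V \<longleftrightarrow> V \<subseteq> L2 M \<and> (\<lambda>x. 0) \<in> V \<and>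
     (\<forall>f\<in>V. \<forall>g\<in>V. \<forall>a b. (\<lambda>x. a * f x + b * g x) \<in> V) \<and>
     (\<forall>f\<in>V. \<forall>g\<in>L2 M. L2norm M (\<lambda>x. f x - g x) = 0 \<longrightarrow> g \<in> V) \<and>
     (\<forall>f\<in>L2 M. (\<forall>e>0. \<exists>g\<in>V. L2norm M (\<lambda>x. f x - g x) < e) \<longrightarrow> f \<in> V)"

definition riesz_basis :: "'k measure \<Rightarrow> ('k \<Rightarrow> complex) set \<Rightarrow> 'i set \<Rightarrow> ('i \<Rightarrow> 'k \<Rightarrow> complex) \<Rightarrow> bool" where
  "riesz_basis M W I e \<longleftrightarrow> (\<forall>i\<in>I. e i \<in> W) \<and>
     (\<exists>A B. 0 < A \<and> A \<le> B \<and>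
        (\<forall>F c. finite F \<longrightarrow> F \<subseteq> I \<longrightarrow>
           A * (\<Sum>i\<in>F. (cmod (c i))\<^sup>2) \<le> (L2norm M (\<lambda>x. \<Sum>i\<in>F. c i * e i x))\<^sup>2 \<and>
           (L2norm M (\<lambda>x. \<Sum>i\<in>F. c i * e i x))\<^sup>2 \<le> B * (\<Sum>i\<in>F. (cmod (c i))\<^sup>2))) \<and>
     (\<forall>f\<in>W. \<forall>eps>0. \<exists>F c. finite F \<and> F \<subseteq> I \<and>
        L2norm M (\<lambda>x. f x - (\<Sum>i\<in>F. c i * e i x)) < eps)"

definition mra :: "'k::field measure \<Rightarrow> 'k \<Rightarrow> (nat \<Rightarrow> 'k) \<Rightarrow> (int \<Rightarrow> ('k \<Rightarrow> complex) set) \<Rightarrow> ('k \<Rightarrow> complex) \<Rightarrow> bool" where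
  "mra M pr u V phi \<longleftrightarrow>
     (\<forall>j. L2_subspace M (V j)) \<and>
     (\<forall>j. V j \<subseteq> V (j + 1)) \<and>
     (\<forall>f\<in>L2 M. \<forall>e>0. \<exists>j. \<exists>g\<in>V j. L2norm M (\<lambda>x. f x - g x) < e) \<and>
     (\<forall>f. (\<forall>j. f \<in> V j) \<longrightarrow> L2norm M f = 0) \<and>
     (\<forall>j f. f \<in> V j \<longleftrightarrow> (\<lambda>x. f (inverse pr * x)) \<in> V (j + 1)) \<and>
     riesz_basis M (V 0) UNIV (\<lambda>k x. phi (x - u k))"

definition direct_complement :: "'k measure \<Rightarrow> ('k \<Rightarrow> complex) set \<Rightarrow> ('k \<Rightarrow> complex) set \<Rightarrow> ('k \<Rightarrow> complex) set \<Rightarrow> bool" where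
  "direct_complement M W V0 V1 \<longleftrightarrow> L2_subspace M W \<and>
     (\<forall>f\<in>V0 \<inter> W. L2norm M f = 0) \<and>
     V1 = {(\<lambda>x. g x + h x) | g h. g \<in> V0 \<and> h \<in> W}"

definition dil_shift :: "'k::field \<Rightarrow> (nat \<Rightarrow> 'k) \<Rightarrow> ('k \<Rightarrow> complex) \<Rightarrow> nat \<Rightarrow> 'k \<Rightarrow> complex" where
  "dil_shift pr u g k = (\<lambda>x. g (inverse pr * x - u k))"

end

theory Submission
  imports Defs
begin

text \<open>
  By the two-scale relations, \<open>L2inner M (omega l) (\<lambda>x. omegat n (x - w))\<close> is a double series in
  the refinement coefficients of the last base-\<open>q\<close> digits \<open>l mod q\<close> and \<open>n mod q\<close>, whose terms are
  the pairings of the parents \<open>omega (l div q)\<close> and \<open>omegat (n div q)\<close> at the points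
  \<open>u j' + pr\<^sup>-\<^sup>1 w - u j\<close>, times the constant by which \<open>x \<mapsto> pr\<^sup>-\<^sup>1 x\<close> rescales Haar measure.
  For \<open>w = u k\<close> these points are again translates \<open>u m\<close>: the \<open>u m\<close> are the finite \<open>pr\<^sup>-\<^sup>1\<close>-adic
  expansions with digits below \<open>p\<close>, and \<open>K\<close> has characteristic \<open>p\<close>. Induction on \<open>l + n\<close> then
  reduces everything to the generators \<open>phi, psi 1, \<dots>, psi (q - 1)\<close>: parents with equal index pair at
  translates exactly like \<open>phi\<close> and \<open>phit\<close>, so the pairing equals that of the generators with
  indices \<open>l mod q\<close> and \<open>n mod q\<close>; parents with different indices pair to zero at all translates,
  and then so do their children.
\<close>

section \<open>Non-archimedean absolute values\<close>

locale nonarch_field =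
  fixes absv :: "'k::field \<Rightarrow> real" and p :: nat
  assumes local_field: "local_field_pc absv p"
begin

lemma absv_nonneg: "absv x \<ge> 0"
  using local_field by (simp add: local_field_pc_def)

lemma absv_eq_0_iff [simp]: "absv x = 0 \<longleftrightarrow> x = 0"
  using local_field by (simp add: local_field_pc_def)

lemma absv_0 [simp]: "absv 0 = 0"
  by simp

lemma absv_pos_iff [simp]: "absv x > 0 \<longleftrightarrow> x \<noteq> 0"
  using absv_nonneg[of x] absv_eq_0_iff[of x] by linarith

lemma absv_mult: "absv (x * y) = absv x * absv y"
  using local_field by (simp add: local_field_pc_def)

lemma absv_ultrametric: "absv (x + y) \<le> max (absv x) (absv y)"
  using local_field by (simp add: local_field_pc_def)

lemma prime_p: "prime p"
  using local_field by (simp add: local_field_pc_def)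

lemma of_nat_p [simp]: "of_nat p = (0::'k)"
  using local_field by (simp add: local_field_pc_def)

lemma p_pos: "p > 0"
  using prime_p prime_gt_0_nat by blast

lemma absv_1 [simp]: "absv 1 = 1"
  using absv_mult[of 1 1] by (metis absv_eq_0_iff mult_cancel_right1 mult_1 one_neq_zero)

lemma absv_minus [simp]: "absv (- x) = absv x"
proof -
  have "absv (-1) * absv (-1) = 1" using absv_mult[of "-1" "-1"] by simp
  then have "absv (-1) = 1"
    using absv_nonneg[of "-1"]
    by (metis abs_of_nonneg mult_cancel_right1 real_sqrt_abs2 real_sqrt_mult_self real_sqrt_one)
  then show ?thesis using absv_mult[of "-1" x] by simp
qed

lemma absv_inverse: "absv (inverse x) = inverse (absv x)"
proof (cases "x = 0")
  case False
  then have "absv (inverse x) * absv x = 1" using absv_mult[of "inverse x" x] by simp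
  then show ?thesis using False by (metis absv_eq_0_iff inverse_unique mult.commute)
qed simp

lemma absv_minus_commute: "absv (x - y) = absv (y - x)"
  by (metis absv_minus minus_diff_eq)

lemma absv_divide: "absv (x / y) = absv x / absv y"
  by (simp add: divide_inverse absv_mult absv_inverse)

lemma absv_power: "absv (x ^ n) = absv x ^ n"
  by (induction n) (simp_all add: absv_mult)

lemma absv_add_le: "absv x \<le> r \<Longrightarrow> absv y \<le> r \<Longrightarrow> absv (x + y) \<le> r"
  using absv_ultrametric[of x y] by linarith

lemma absv_add_less: "absv x < r \<Longrightarrow> absv y < r \<Longrightarrow> absv (x + y) < r"
  using absv_ultrametric[of x y] by linarith

lemma absv_diff_less: "absv x < r \<Longrightarrow> absv y < r \<Longrightarrow> absv (x - y) < r"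
  using absv_add_less[of x r "- y"] by simp

lemma of_nat_mod_p: "(of_nat (x mod p) :: 'k) = of_nat x"
proof -
  have "(of_nat x :: 'k) = of_nat (x mod p + p * (x div p))" by simp
  also have "\<dots> = of_nat (x mod p)" by (simp only: of_nat_add of_nat_mult of_nat_p) simp
  finally show ?thesis by simp
qed

lemma of_nat_p_minus_1: "(of_nat (p - 1) :: 'k) = - 1"
proof -
  have "(of_nat (p - 1) :: 'k) + 1 = of_nat p" using p_pos
    by (metis Suc_diff_1 of_nat_Suc add.commute)
  then show ?thesis by (simp add: eq_neg_iff_add_eq_0)
qed

end

locale uniformized_field = nonarch_field absv p for absv :: "'k::field \<Rightarrow> real" and p +
  fixes c :: nat and pr :: 'k
  assumes prime_element: "prime_element absv (p ^ c) pr"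
begin

definition q :: real where "q = real (p ^ c)"

lemma absv_pr: "absv pr = inverse q"
  using prime_element by (simp add: prime_element_def q_def)

lemma absv_pr_bounds: "0 < absv pr" "absv pr < 1"
  using prime_element unfolding prime_element_def by blast+

lemma q_gt_1: "q > 1"
  using absv_pr absv_pr_bounds by (metis inverse_inverse_eq one_less_inverse)

lemma q_pos: "q > 0"
  using q_gt_1 by simp

lemma pr_neq_0: "pr \<noteq> 0"
  using absv_pr_bounds by auto

lemma p_power_c_ge_2: "p ^ c \<ge> 2"
  using q_gt_1 unfolding q_def by linarith

lemma absv_inverse_pr: "absv (inverse pr) = q"
  by (simp add: absv_inverse absv_pr)

lemma absv_le_inverse_q_if_less_1: "absv x < 1 \<Longrightarrow> absv x \<le> inverse q"
  using prime_element absv_pr by (auto simp: prime_element_def)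

lemma absv_le_1_if_less_q:
  assumes "absv x < q" shows "absv x \<le> 1"
proof (rule ccontr)
  assume "\<not> absv x \<le> 1"
  then have x: "absv x > 1" "x \<noteq> 0" by auto
  then have "absv (inverse x) < 1" by (simp add: absv_inverse inverse_less_1_iff)
  then have "inverse (absv x) \<le> inverse q"
    using absv_le_inverse_q_if_less_1 absv_inverse by metis
  then have "q \<le> absv x" using x q_pos
    by (metis inverse_le_imp_le less_trans zero_less_one)
  then show False using assms by simp
qed

lemma absv_less_iff_mult_q_le:
  assumes "z \<noteq> 0"
  shows "absv y < absv z \<longleftrightarrow> absv y * q \<le> absv z"
proof
  assume "absv y < absv z"
  moreover have "absv z > 0" using assms by simp
  ultimately have "absv (y / z) \<le> inverse q"
    by (intro absv_le_inverse_q_if_less_1) (simp add: absv_divide)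
  then show "absv y * q \<le> absv z"
    using assms q_pos by (simp add: absv_divide absv_nonneg divide_le_eq field_simps)
next
  assume le: "absv y * q \<le> absv z"
  show "absv y < absv z"
  proof (cases "y = 0")
    case False
    then have "absv y < absv y * q" using q_gt_1 absv_nonneg[of y] by simp
    then show ?thesis using le by linarith
  qed (use assms in simp)
qed

lemma absv_eq_q_powr:
  fixes j :: int
  obtains z where "absv z = q powr j"
proof (cases "j \<ge> 0")
  case True
  have "absv (inverse pr ^ nat j) = q powr real (nat j)"
    using q_pos by (simp add: absv_power absv_inverse_pr powr_realpow)
  then show ?thesis using that True by simp
next
  case False
  have "absv (pr ^ nat (- j)) = inverse (q powr real (nat (- j)))"
    using q_pos by (simp add: absv_power absv_pr powr_realpow power_inverse)
  also have "\<dots> = q powr j" using False q_pos by (simp add: powr_minus)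
  finally show ?thesis using that by blast
qed

text \<open>The value group is \<open>q\<^sup>\<int>\<close>, so every open ball around 0 is a closed one.\<close>

lemma open_ball_eq_closed_ball:
  assumes "\<rho> > 0"
  obtains z where "z \<noteq> 0" "\<And>y. absv y < \<rho> \<longleftrightarrow> absv y \<le> absv z"
proof -
  define j :: int where "j = \<lceil>log q \<rho>\<rceil> - 1"
  obtain z where az: "absv z = q powr j" using absv_eq_q_powr by blast
  have zpos: "absv z > 0" using az q_pos by simp
  have lt: "q powr j < \<rho>"
  proof -
    have "real_of_int j < log q \<rho>" unfolding j_def by linarith
    then show ?thesis using assms q_gt_1 by (metis less_log_iff)
  qed
  have ge: "\<rho> \<le> q powr j * q"
  proof -
    have "log q \<rho> \<le> real_of_int j + 1" unfolding j_def by linarith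
    then have "q powr (log q \<rho>) \<le> q powr (real_of_int j + 1)" using q_gt_1 by simp
    then show ?thesis using assms q_gt_1 by (simp add: powr_add)
  qed
  have "absv y < \<rho> \<longleftrightarrow> absv y \<le> absv z" for y
  proof
    assume y: "absv y < \<rho>"
    show "absv y \<le> absv z"
    proof (cases "y = 0")
      case False
      have "absv (y / z) < \<rho> / absv z" using y zpos by (simp add: absv_divide divide_strict_right_mono)
      also have "\<dots> \<le> q" using ge az zpos by (simp add: divide_le_eq mult.commute)
      finally have "absv (y / z) \<le> 1" by (rule absv_le_1_if_less_q)
      then show ?thesis using zpos by (simp add: absv_divide pos_divide_le_eq)
    qed (simp add: absv_nonneg)
  next
    assume "absv y \<le> absv z" then show "absv y < \<rho>" using lt az by simp
  qed
  moreover have "z \<noteq> 0" using zpos by auto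
  ultimately show ?thesis using that by blast
qed

end

section \<open>The translation set\<close>

definition from_digits :: "nat \<Rightarrow> (nat \<Rightarrow> nat) \<Rightarrow> nat \<Rightarrow> nat" where
  "from_digits b d L = (\<Sum>j<L. d j * b ^ j)"

lemma from_digits_less: "(\<forall>j<L. d j < b) \<Longrightarrow> from_digits b d L < b ^ L"
proof (induction L)
  case 0 then show ?case by (simp add: from_digits_def)
next
  case (Suc L)
  then have ih: "from_digits b d L < b ^ L" and dl: "d L < b" by auto
  have "from_digits b d (Suc L) = from_digits b d L + d L * b ^ L" by (simp add: from_digits_def)
  also have "\<dots> < Suc (d L) * b ^ L" using ih by simp
  also have "\<dots> \<le> b * b ^ L" using dl by (intro mult_right_mono) auto
  finally show ?case by simp
qed

lemma from_digits_digit: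
  assumes "\<forall>j<L. d j < b" "0 < b"
  shows "from_digits b d L div b ^ i mod b = (if i < L then d i else 0)"
  using assms
proof (induction L arbitrary: i)
  case 0 then show ?case by (simp add: from_digits_def)
next
  case (Suc L)
  then have ih: "\<And>i. from_digits b d L div b ^ i mod b = (if i < L then d i else 0)"
    and dl: "d L < b" and lt: "from_digits b d L < b ^ L" using from_digits_less[of L d b] by auto
  have eq: "from_digits b d (Suc L) = from_digits b d L + d L * b ^ L" by (simp add: from_digits_def)
  consider "i < L" | "i = L" | "Suc L \<le> i" by linarith
  then show ?case
  proof cases
    case 1
    then obtain t where t: "L = i + Suc t" by (metis add_Suc_right less_iff_Suc_add add.commute)
    have "from_digits b d (Suc L) = from_digits b d L + (d L * b ^ t * b) * b ^ i"
      using eq by (simp add: t power_add ac_simps)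
    moreover have "b ^ i > 0" using Suc.prems(2) by simp
    ultimately have "from_digits b d (Suc L) div b ^ i = from_digits b d L div b ^ i + d L * b ^ t * b"
      by (metis add.commute div_mult_self1 less_not_refl2)
    then show ?thesis using ih 1 by simp
  next
    case 2
    have "from_digits b d (Suc L) div b ^ L = d L"
      using eq lt Suc.prems(2) by (simp add: div_add1_eq div_mult_self2)
    then show ?thesis using 2 dl by simp
  next
    case 3
    then have "b ^ Suc L \<le> b ^ i" using Suc.prems(2) power_increasing[of "Suc L" i b] by simp
    moreover have "from_digits b d (Suc L) < b ^ Suc L" using from_digits_less[of "Suc L" d b] Suc.prems by blast
    ultimately show ?thesis using 3 by simp
  qed
qed

context uniformized_field
begin

text \<open>The \<open>u(n)\<close> are exactly the expansions \<open>expansion zeta B e\<close> with all digits \<open>e i k < p\<close>;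
  since \<open>of_nat p = 0\<close> in \<open>K\<close>, every digit function gives some \<open>u(n)\<close>.\<close>

definition expansion :: "(nat \<Rightarrow> 'k) \<Rightarrow> nat \<Rightarrow> (nat \<Rightarrow> nat \<Rightarrow> nat) \<Rightarrow> 'k" where
  "expansion \<zeta> B e = (\<Sum>i<B. \<Sum>k<c. of_nat (e i k) * \<zeta> k * inverse pr ^ Suc i)"

lemma uK_eq_expansion:
  assumes "n < B"
  shows "uK pr \<zeta> p c n = expansion \<zeta> B (\<lambda>i k. (n div (p ^ c) ^ i) mod p ^ c div p ^ k mod p)"
proof -
  let ?f = "\<lambda>i. \<Sum>k<c. of_nat ((n div (p ^ c) ^ i) mod p ^ c div p ^ k mod p) * \<zeta> k * inverse pr ^ Suc i"
  have "uK pr \<zeta> p c n = (\<Sum>i\<le>n. ?f i)"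
    unfolding uK_def u0_def
    by (intro sum.cong refl) (simp add: sum_distrib_right sum_distrib_left mult_ac)
  also have "\<dots> = (\<Sum>i<B. ?f i)"
  proof (rule sum.mono_neutral_left)
    show "\<forall>i\<in>{..<B} - {..n}. ?f i = 0"
    proof
      fix i assume "i \<in> {..<B} - {..n}"
      moreover have "i < (p ^ c) ^ i"
        using p_power_c_ge_2 by (metis less_exp order_less_le_trans power_mono zero_le_numeral)
      ultimately have "n div (p ^ c) ^ i = 0" by simp
      then show "?f i = 0" by simp
    qed
  qed (use assms in auto)
  finally show ?thesis unfolding expansion_def .
qed

lemma expansion_eq_uK: "\<exists>n. uK pr \<zeta> p c n = expansion \<zeta> B e"
proof -
  define d where "d i = from_digits p (\<lambda>k. e i k mod p) c" for i
  have d_less: "d i < p ^ c" for i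
    unfolding d_def using from_digits_less p_pos by simp
  define n where "n = from_digits (p ^ c) d B"
  have digit_n: "n div (p ^ c) ^ i mod p ^ c = (if i < B then d i else 0)" for i
    unfolding n_def using from_digits_digit[of B d "p ^ c" i] d_less p_pos by simp
  have digit_d: "d i div p ^ k mod p = (if k < c then e i k mod p else 0)" for i k
    unfolding d_def using from_digits_digit[of c "\<lambda>k. e i k mod p" p k] p_pos by simp
  define B' where "B' = max B (Suc n)"
  have "uK pr \<zeta> p c n = expansion \<zeta> B' (\<lambda>i k. (n div (p ^ c) ^ i) mod p ^ c div p ^ k mod p)"
    by (rule uK_eq_expansion) (simp add: B'_def)
  also have "\<dots> = (\<Sum>i<B'. \<Sum>k<c. of_nat (if i < B then e i k else 0) * \<zeta> k * inverse pr ^ Suc i)"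
  proof -
    have "(of_nat ((n div (p ^ c) ^ i) mod p ^ c div p ^ k mod p) :: 'k) = of_nat (if i < B then e i k else 0)"
      if "k < c" for i k
      using that by (cases "i < B") (simp_all only: digit_n digit_d if_True if_False of_nat_mod_p, simp_all)
    then show ?thesis unfolding expansion_def by (intro sum.cong refl) simp
  qed
  also have "\<dots> = (\<Sum>i<B. \<Sum>k<c. of_nat (if i < B then e i k else 0) * \<zeta> k * inverse pr ^ Suc i)"
    by (rule sum.mono_neutral_right) (auto simp: B'_def)
  also have "\<dots> = expansion \<zeta> B e"
    unfolding expansion_def by (intro sum.cong refl) simp
  finally show ?thesis by blast
qed

lemma expansion_add: "expansion \<zeta> B e1 + expansion \<zeta> B e2 = expansion \<zeta> B (\<lambda>i k. e1 i k + e2 i k)"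
  unfolding expansion_def by (simp add: sum.distrib[symmetric] distrib_right)

lemma expansion_uminus: "- expansion \<zeta> B e = expansion \<zeta> B (\<lambda>i k. (p - 1) * e i k)"
  using of_nat_p_minus_1 unfolding expansion_def by (simp add: sum_negf[symmetric])

lemma expansion_dilate:
  "inverse pr * expansion \<zeta> B e = expansion \<zeta> (Suc B) (\<lambda>i k. if i = 0 then 0 else e (i - 1) k)"
  unfolding expansion_def
  by (simp only: sum.lessThan_Suc_shift) (simp add: sum_distrib_left ac_simps)

lemma uK_0 [simp]: "uK pr \<zeta> p c 0 = 0"
  by (simp add: uK_def u0_def)

lemma uK_add_dilate_diff: "\<exists>m. uK pr \<zeta> p c m = uK pr \<zeta> p c j' + inverse pr * uK pr \<zeta> p c k - uK pr \<zeta> p c j"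
proof -
  define B where "B = Suc (j + j' + k)"
  define d where "d n i k = (n div (p ^ c) ^ i) mod p ^ c div p ^ k mod p" for n i k
  have u: "uK pr \<zeta> p c j' = expansion \<zeta> (Suc B) (d j')" "uK pr \<zeta> p c j = expansion \<zeta> (Suc B) (d j)"
    "uK pr \<zeta> p c k = expansion \<zeta> B (d k)"
    unfolding d_def by (rule uK_eq_expansion; simp add: B_def)+
  have "uK pr \<zeta> p c j' + inverse pr * uK pr \<zeta> p c k - uK pr \<zeta> p c j
      = expansion \<zeta> (Suc B) (\<lambda>i k'. d j' i k' + (if i = 0 then 0 else d k (i - 1) k') + (p - 1) * d j i k')"
    by (simp only: u expansion_dilate diff_conv_add_uminus expansion_uminus expansion_add)
  moreover obtain m where "uK pr \<zeta> p c m
      = expansion \<zeta> (Suc B) (\<lambda>i k'. d j' i k' + (if i = 0 then 0 else d k (i - 1) k') + (p - 1) * d j i k')"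
    using expansion_eq_uK by blast
  ultimately show ?thesis by auto
qed

lemma uK_uminus: "\<exists>m. uK pr \<zeta> p c m = - uK pr \<zeta> p c k"
  using uK_add_dilate_diff[of \<zeta> 0 0 k] by simp

end

section \<open>Haar measure under translation and dilation\<close>

definition cosets :: "'a::plus set \<Rightarrow> 'a set \<Rightarrow> 'a set set" where
  "cosets S H = (\<lambda>t. (\<lambda>y. t + y) ` H) ` S"

lemma disjoint_family_on_cosets:
  fixes H :: "'a::ab_group_add set"
  assumes H_diff: "\<forall>a\<in>H. \<forall>b\<in>H. a - b \<in> H"
  shows "disjoint_family_on id (cosets S H)"
proof -
  have coset_sub: "(\<lambda>y. t1 + y) ` H \<subseteq> (\<lambda>y. t2 + y) ` H"
    if "t1 + h1 = t2 + h2" "h1 \<in> H" "h2 \<in> H" for t1 t2 h1 h2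
  proof
    fix w assume "w \<in> (\<lambda>y. t1 + y) ` H"
    then obtain h where "h \<in> H" "w = t1 + h" by blast
    moreover have "h - (h1 - h2) \<in> H" using H_diff that \<open>h \<in> H\<close> by blast
    moreover have "w = t2 + (h - (h1 - h2))" using that \<open>w = t1 + h\<close> by (simp add: algebra_simps)
    ultimately show "w \<in> (\<lambda>y. t2 + y) ` H" by blast
  qed
  show ?thesis
    unfolding disjoint_family_on_def cosets_def
    by (auto dest: coset_sub coset_sub[OF sym] simp: set_eq_iff)
qed

lemma cosets_scale:
  fixes z :: "'a::field"
  shows "cosets ((\<lambda>y. z * y) ` S) ((\<lambda>y. z * y) ` H) = (\<lambda>A. (\<lambda>y. z * y) ` A) ` cosets S H"
  unfolding cosets_def by (simp add: image_image distrib_left)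

lemma image_mult_left_eq:
  fixes z :: "'a::field"
  assumes "z \<noteq> 0"
  shows "(\<lambda>y. z * y) ` A = {y. y / z \<in> A}"
proof
  show "{y. y / z \<in> A} \<subseteq> (\<lambda>y. z * y) ` A"
  proof
    fix y assume "y \<in> {y. y / z \<in> A}"
    moreover have "y = z * (y / z)" using assms by simp
    ultimately show "y \<in> (\<lambda>y. z * y) ` A" by blast
  qed
qed (use assms in auto)

locale haar_local_field = uniformized_field absv p c pr for absv :: "'k::field \<Rightarrow> real" and p c pr +
  fixes zeta :: "nat \<Rightarrow> 'k" and M :: "'k measure"
  assumes residue_basis: "residue_basis absv p c zeta"
    and haar: "haar_normalized absv M"
begin

abbreviation u :: "nat \<Rightarrow> 'k" where "u \<equiv> uK pr zeta p c"

definition disc :: "'k \<Rightarrow> real \<Rightarrow> 'k set" where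
  "disc x r = {y. absv (y - x) < r}"

definition integers :: "'k set" where
  "integers = {y. absv y \<le> 1}"

lemma space_M [simp]: "space M = UNIV"
  using haar by (simp add: haar_normalized_def)

lemma sets_M: "sets M = sigma_sets UNIV (range (\<lambda>(x, r). disc x r))"
proof -
  have "{{y. absv (y - x) < r} | x r. True} = range (\<lambda>(x, r). disc x r)"
    by (auto simp: disc_def)
  then show ?thesis using haar by (simp add: haar_normalized_def)
qed

lemma disc_in_sets [simp]: "disc x r \<in> sets M"
  unfolding sets_M by (rule sigma_sets.Basic) auto

lemma translate_in_sets: "A \<in> sets M \<Longrightarrow> (\<lambda>y. x + y) ` A \<in> sets M"
  using haar unfolding haar_normalized_def by blast

lemma emeasure_translate: "A \<in> sets M \<Longrightarrow> emeasure M ((\<lambda>y. x + y) ` A) = emeasure M A"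
  using haar unfolding haar_normalized_def by blast

lemma emeasure_integers: "emeasure M integers = 1"
  using haar by (simp add: haar_normalized_def integers_def)

lemma vimage_translate: "(\<lambda>y. y + (a::'k)) -` A = (\<lambda>y. - a + y) ` A"
proof
  show "(\<lambda>y. y + a) -` A \<subseteq> (\<lambda>y. - a + y) ` A"
  proof
    fix x assume "x \<in> (\<lambda>y. y + a) -` A"
    moreover have "x = - a + (x + a)" by simp
    ultimately show "x \<in> (\<lambda>y. - a + y) ` A" by blast
  qed
qed auto

lemma measurable_translate [measurable]: "(\<lambda>y. y + a) \<in> measurable M M"
  by (rule measurableI) (simp_all only: space_M UNIV_I Int_UNIV_right vimage_translate translate_in_sets)

lemma distr_translate: "distr M M (\<lambda>y. y + a) = M"
proof (rule measure_eqI)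
  fix A assume "A \<in> sets (distr M M (\<lambda>y. y + a))"
  then have A: "A \<in> sets M" by simp
  show "emeasure (distr M M (\<lambda>y. y + a)) A = emeasure M A"
    by (simp only: emeasure_distr[OF measurable_translate A] space_M Int_UNIV_right
        vimage_translate emeasure_translate[OF A])
qed simp

lemma integral_translate:
  fixes f :: "'k \<Rightarrow> 'b::{banach, second_countable_topology}"
  assumes "f \<in> borel_measurable M"
  shows "(\<integral>x. f (x + a) \<partial>M) = integral\<^sup>L M f"
  using integral_distr[OF measurable_translate assms, of a] distr_translate by simp

lemma integrable_translate_iff:
  fixes f :: "'k \<Rightarrow> 'b::{banach, second_countable_topology}"
  assumes "f \<in> borel_measurable M"
  shows "integrable M (\<lambda>x. f (x + a)) \<longleftrightarrow> integrable M f"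
  using integrable_distr_eq[OF measurable_translate assms, of a] distr_translate by simp

lemma vimage_dilate_disc: "(\<lambda>x. inverse pr * x) -` disc y r = disc (pr * y) (r * absv pr)"
proof -
  have "absv (inverse pr * x - y) = absv (x - pr * y) / absv pr" for x
  proof -
    have "inverse pr * x - y = inverse pr * (x - pr * y)" using pr_neq_0 by (simp add: field_simps)
    then show ?thesis by (simp add: absv_mult absv_inverse divide_inverse mult.commute)
  qed
  then show ?thesis unfolding disc_def using absv_pr_bounds by (auto simp: pos_divide_less_eq)
qed

lemma measurable_dilate [measurable]: "(\<lambda>x. inverse pr * x) \<in> measurable M M"
  by (rule measurable_sigma_sets[OF sets_M]) (auto simp: vimage_dilate_disc)

lemma disc_eq_translate: "disc x r = (\<lambda>y. x + y) ` disc 0 r"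
proof
  show "disc x r \<subseteq> (\<lambda>y. x + y) ` disc 0 r"
  proof
    fix z assume "z \<in> disc x r"
    then have "z - x \<in> disc 0 r" "z = x + (z - x)" by (auto simp: disc_def)
    then show "z \<in> (\<lambda>y. x + y) ` disc 0 r" by blast
  qed
qed (auto simp: disc_def)

lemma emeasure_disc_translate: "emeasure M (disc x r) = emeasure M (disc 0 r)"
  by (simp add: disc_eq_translate[of x] emeasure_translate)

lemma disc_recenter:
  assumes "y \<in> disc x r" shows "disc x r = disc y r"
proof -
  have y: "absv (y - x) < r" using assms by (simp add: disc_def)
  have "absv (z - x) < r \<longleftrightarrow> absv (z - y) < r" for z
  proof
    assume "absv (z - x) < r"
    then have "absv ((z - x) - (y - x)) < r" using y absv_diff_less by blast
    then show "absv (z - y) < r" by simp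
  next
    assume "absv (z - y) < r"
    then have "absv ((z - y) + (y - x)) < r" using y absv_add_less by blast
    then show "absv (z - x) < r" by simp
  qed
  then show ?thesis by (auto simp: disc_def)
qed

lemma Int_stable_discs: "Int_stable (range (\<lambda>(x, r). disc x r))"
proof (rule Int_stableI)
  fix A B assume "A \<in> range (\<lambda>(x, r). disc x r)" "B \<in> range (\<lambda>(x, r). disc x r)"
  then obtain x1 r1 x2 r2 where A: "A = disc x1 r1" and B: "B = disc x2 r2" by auto
  show "A \<inter> B \<in> range (\<lambda>(x, r). disc x r)"
  proof (cases "A \<inter> B = {}")
    case True
    have "disc 0 0 = {}" by (auto simp: disc_def absv_nonneg not_less)
    then show ?thesis using True by (metis case_prod_conv rangeI)
  next
    case False
    then obtain y where "y \<in> A" "y \<in> B" by blast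
    then have "A = disc y r1" "B = disc y r2" using A B disc_recenter by auto
    then have "A \<inter> B = disc y (min r1 r2)" by (auto simp: disc_def)
    then show ?thesis by (metis case_prod_conv rangeI)
  qed
qed

end

context haar_local_field
begin

lemma emeasure_eq_card_cosets:
  assumes H0: "0 \<in> H" and H_diff: "\<forall>a\<in>H. \<forall>b\<in>H. a - b \<in> H" and HS: "H \<subseteq> S"
    and S_add: "\<forall>a\<in>S. \<forall>b\<in>S. a + b \<in> S" and H: "H \<in> sets M" and fin: "finite (cosets S H)"
  shows "emeasure M S = of_nat (card (cosets S H)) * emeasure M H"
proof -
  have disjoint: "disjoint_family_on id (cosets S H)" by (rule disjoint_family_on_cosets[OF H_diff])
  have in_sets: "id ` cosets S H \<subseteq> sets M"
    using translate_in_sets[OF H] by (auto simp: cosets_def)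
  have union: "(\<Union>C\<in>cosets S H. id C) = S"
  proof
    show "(\<Union>C\<in>cosets S H. id C) \<subseteq> S" using HS S_add by (auto simp: cosets_def)
    show "S \<subseteq> (\<Union>C\<in>cosets S H. id C)"
    proof
      fix t assume "t \<in> S"
      then have "t \<in> (\<lambda>y. t + y) ` H" "(\<lambda>y. t + y) ` H \<in> cosets S H"
        using H0 by (auto simp: cosets_def image_iff intro: exI[of _ 0])
      then show "t \<in> (\<Union>C\<in>cosets S H. id C)" by auto
    qed
  qed
  have "emeasure M S = (\<Sum>C\<in>cosets S H. emeasure M (id C))"
    by (simp only: sum_emeasure[OF in_sets disjoint fin] union)
  also have "\<dots> = (\<Sum>C\<in>cosets S H. emeasure M H)"
    using emeasure_translate[OF H] by (intro sum.cong) (auto simp: cosets_def)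
  finally show ?thesis by simp
qed

text \<open>The number of residue classes of the integers modulo the open unit disc. It equals \<open>q\<close>,
  but only its positivity is needed: the constant by which dilation rescales Haar measure cancels.\<close>

definition residue_card :: nat where
  "residue_card = card (cosets integers (disc 0 1))"

lemma finite_residue_cosets: "finite (cosets integers (disc 0 1))"
proof -
  define R where "R = (\<lambda>a. \<Sum>k<c. of_nat (a k) * zeta k) ` digits p c"
  have "finite (digits p c)"
  proof -
    have "digits p c = {f. \<forall>x. (x \<in> {..<c} \<longrightarrow> f x \<in> {..<p}) \<and> (x \<notin> {..<c} \<longrightarrow> f x = 0)}"
      unfolding digits_def by (auto simp: not_less)
    then show ?thesis using finite_set_of_finite_funs[of "{..<c}" "{..<p}" 0] by simp
  qed
  then have "finite R" unfolding R_def by simp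
  moreover have "cosets integers (disc 0 1) \<subseteq> (\<lambda>v. (\<lambda>y. v + y) ` disc 0 1) ` R"
  proof
    fix C assume "C \<in> cosets integers (disc 0 1)"
    then obtain t where t: "absv t \<le> 1" "C = (\<lambda>y. t + y) ` disc 0 1"
      unfolding cosets_def integers_def by blast
    then obtain a where a: "a \<in> digits p c" "absv (t - (\<Sum>k<c. of_nat (a k) * zeta k)) < 1"
      using residue_basis unfolding residue_basis_def by blast
    then have "disc t 1 = disc (\<Sum>k<c. of_nat (a k) * zeta k) 1"
      by (intro disc_recenter) (simp add: disc_def absv_minus_commute)
    then have "C = (\<lambda>y. (\<Sum>k<c. of_nat (a k) * zeta k) + y) ` disc 0 1"
      using t(2) disc_eq_translate by metis
    then show "C \<in> (\<lambda>v. (\<lambda>y. v + y) ` disc 0 1) ` R" using a(1) unfolding R_def by blast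
  qed
  ultimately show ?thesis using finite_subset by blast
qed

lemma residue_card_pos: "residue_card > 0"
proof -
  have "disc 0 1 \<in> cosets integers (disc 0 1)"
    unfolding cosets_def integers_def by (rule image_eqI[of _ _ 0]) auto
  then show ?thesis unfolding residue_card_def using finite_residue_cosets card_gt_0_iff by blast
qed

text \<open>With \<open>disc 0 \<rho> = z \<cdot> integers\<close>, multiplication by \<open>z\<close> maps the cosets of \<open>disc 0 1\<close> in \<open>integers\<close>
  onto those of \<open>disc 0 (\<rho> / q)\<close> in \<open>disc 0 \<rho>\<close>.\<close>

lemma emeasure_disc_eq_residue_card:
  "emeasure M (disc 0 \<rho>) = of_nat residue_card * emeasure M (disc 0 (\<rho> / q))"
proof (cases "\<rho> > 0")
  case False
  then have "disc 0 \<rho> = {}" "disc 0 (\<rho> / q) = {}" using q_pos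
    by (auto simp: disc_def not_less intro: order_trans[OF _ absv_nonneg] divide_nonpos_pos)
  then show ?thesis by simp
next
  case True
  obtain z where z: "z \<noteq> 0" and closed: "\<And>y. absv y < \<rho> \<longleftrightarrow> absv y \<le> absv z"
    using open_ball_eq_closed_ball[OF True] by blast
  let ?S = "disc 0 \<rho>" and ?H = "disc 0 (\<rho> / q)"
  have open_iff: "absv y < \<rho> / q \<longleftrightarrow> absv y < absv z" for y
  proof -
    have "absv y < \<rho> / q \<longleftrightarrow> absv (y * inverse pr) < \<rho>"
      using q_pos by (simp add: absv_mult absv_inverse_pr pos_less_divide_eq)
    also have "\<dots> \<longleftrightarrow> absv y < absv z"
      using closed[of "y * inverse pr"] absv_less_iff_mult_q_le[OF z, of y]
      by (simp add: absv_mult absv_inverse_pr)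
    finally show ?thesis .
  qed
  have scale_integers: "(\<lambda>y. z * y) ` integers = ?S"
    using z by (auto simp: image_mult_left_eq disc_def closed integers_def absv_divide divide_le_eq)
  have scale_disc: "(\<lambda>y. z * y) ` disc 0 1 = ?H"
    using z by (auto simp: image_mult_left_eq disc_def open_iff absv_divide divide_less_eq)
  have cosets_SH: "cosets ?S ?H = (\<lambda>A. (\<lambda>y. z * y) ` A) ` cosets integers (disc 0 1)"
    by (simp only: cosets_scale[symmetric] scale_integers scale_disc)
  have "inj (\<lambda>A. (\<lambda>y. z * y) ` A)"
    using z by (intro injI) (simp add: inj_image_eq_iff inj_on_def)
  then have card: "card (cosets ?S ?H) = residue_card"
    unfolding cosets_SH residue_card_def by (simp add: card_image inj_on_subset)
  show ?thesis
  proof (subst emeasure_eq_card_cosets)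
    show "finite (cosets ?S ?H)" using cosets_SH finite_residue_cosets by simp
    show "?H \<in> sets M" by (rule disc_in_sets)
  qed (use card z absv_diff_less absv_add_le in \<open>auto simp: disc_def closed open_iff\<close>)
qed

lemma emeasure_disc_q_power_finite: "emeasure M (disc 0 (q ^ i)) \<noteq> \<infinity>"
proof (induction i)
  case 0
  have "integers \<in> sets M" using emeasure_integers emeasure_notin_sets by fastforce
  then have "emeasure M (disc 0 1) \<le> emeasure M integers"
    by (intro emeasure_mono) (auto simp: disc_def integers_def)
  then show ?case using emeasure_integers by (auto simp: top_unique)
next
  case (Suc i)
  then show ?case
    using emeasure_disc_eq_residue_card[of "q ^ Suc i"] q_pos by (simp add: ennreal_mult_eq_top_iff)
qed

lemma distr_dilate: "distr M M (\<lambda>x. inverse pr * x) = density M (\<lambda>_. ennreal (1 / real residue_card))"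
proof (rule measure_eqI_generator_eq[OF Int_stable_discs, of UNIV _ _ "\<lambda>i. disc 0 (q ^ i)"])
  have emeasure_dilate: "emeasure (distr M M (\<lambda>x. inverse pr * x)) (disc x r) = emeasure M (disc 0 (r / q))"
    for x r
    by (simp add: emeasure_distr vimage_dilate_disc emeasure_disc_translate[of "pr * x"] absv_pr
        divide_inverse)
  show "range (\<lambda>i. disc 0 (q ^ i)) \<subseteq> range (\<lambda>(x, r). disc x r)" by (auto intro: rangeI[of _ "(0, _)"])
  show "(\<Union>i. disc 0 (q ^ i)) = UNIV"
    using real_arch_pow[OF q_gt_1] by (auto simp: disc_def)
  show "emeasure (distr M M (\<lambda>x. inverse pr * x)) (disc 0 (q ^ i)) \<noteq> \<infinity>" for i
  proof -
    have "disc 0 (q ^ i / q) \<subseteq> disc 0 (q ^ i)"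
      using q_gt_1 by (auto simp: disc_def divide_le_eq intro: less_le_trans)
    then have "emeasure M (disc 0 (q ^ i / q)) \<le> emeasure M (disc 0 (q ^ i))"
      by (rule emeasure_mono) (rule disc_in_sets)
    then show ?thesis using emeasure_disc_q_power_finite[of i] emeasure_dilate by (auto simp: top_unique)
  qed
  fix X assume "X \<in> range (\<lambda>(x, r). disc x r)"
  then obtain x r where X: "X = disc x r" by auto
  have "ennreal (1 / real residue_card) * of_nat residue_card = 1"
    using residue_card_pos by (simp add: ennreal_of_nat_eq_real_of_nat ennreal_mult''[symmetric])
  then have "emeasure M (disc 0 (r / q)) = ennreal (1 / real residue_card) * emeasure M (disc x r)"
    by (simp add: emeasure_disc_eq_residue_card[of r] emeasure_disc_translate[of x] mult.assoc[symmetric])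
  then show "emeasure (distr M M (\<lambda>x. inverse pr * x)) X
      = emeasure (density M (\<lambda>_. ennreal (1 / real residue_card))) X"
    by (simp add: X emeasure_dilate emeasure_density_const)
qed (simp_all add: sets_M)

lemma integral_dilate:
  fixes f :: "'k \<Rightarrow> complex"
  assumes f: "f \<in> borel_measurable M"
  shows "(\<integral>x. f (inverse pr * x) \<partial>M) = complex_of_real (1 / real residue_card) * integral\<^sup>L M f"
proof -
  have "(\<integral>x. f (inverse pr * x) \<partial>M) = integral\<^sup>L (density M (\<lambda>_. ennreal (1 / real residue_card))) f"
    by (simp add: integral_distr[OF measurable_dilate f, symmetric] distr_dilate)
  also have "\<dots> = (\<integral>x. (1 / real residue_card) *\<^sub>R f x \<partial>M)"
    by (rule integral_density[OF f]) auto
  finally show ?thesis by (simp add: scaleR_conv_of_real)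
qed

end

section \<open>Square-integrable functions\<close>

lemma le_sqrt_mult_if_le_weighted_means:
  fixes A B I :: real
  assumes A: "A \<ge> 0" and B: "B \<ge> 0" and H: "\<And>t. t > 0 \<Longrightarrow> I \<le> (t * A + B / t) / 2"
  shows "I \<le> sqrt A * sqrt B"
proof (cases "A > 0 \<and> B > 0")
  case True
  define t where "t = sqrt B / sqrt A"
  have sA: "sqrt A * sqrt A = A" "sqrt A > 0" using True by simp_all
  have sB: "sqrt B * sqrt B = B" "sqrt B > 0" using True by simp_all
  have t: "t > 0" using sA sB by (simp add: t_def)
  have "t * A = sqrt B / sqrt A * (sqrt A * sqrt A)" using sA unfolding t_def by simp
  also have "\<dots> = sqrt A * sqrt B" using sA(2) by (simp add: field_simps)
  finally have 1: "t * A = sqrt A * sqrt B" .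
  have "B / t = (sqrt B * sqrt B) / (sqrt B / sqrt A)" using sB t_def by simp
  also have "\<dots> = sqrt A * sqrt B" using sA(2) sB(2) by (simp add: field_simps)
  finally have 2: "B / t = sqrt A * sqrt B" .
  show ?thesis using H[OF t] 1 2 by simp
next
  case False
  then have z: "A = 0 \<or> B = 0" using A B by auto
  show ?thesis
  proof (rule ccontr)
    assume "\<not> ?thesis"
    then have I: "I > 0" using z by auto
    show False
    proof (cases "A = 0")
      case True
      define t where "t = B / I + 1"
      have "B / I \<ge> 0" using I B by simp
      then have t: "t > 0" by (simp add: t_def)
      have "B / t < I"
      proof -
        have "I * t = B + I" using I by (simp add: t_def field_simps)
        then have "B < I * t" using I by simp
        then show ?thesis using t by (simp add: divide_less_eq mult.commute)
      qed
      then show False using H[OF t] True I by simp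
    next
      case False
      then have B0: "B = 0" using z by simp
      have Ap: "A > 0" using False A by simp
      define t where "t = I / A"
      have t: "t > 0" using I Ap by (simp add: t_def)
      have "t * A = I" using Ap by (simp add: t_def)
      then show False using H[OF t] B0 I by simp
    qed
  qed
qed

lemma borel_measurable_cnj_comp[measurable]:
  assumes [measurable]: "g \<in> borel_measurable M"
  shows "(\<lambda>x. cnj (g x)) \<in> borel_measurable M"
proof -
  have "(\<lambda>x. cnj (g x)) = (\<lambda>x. complex_of_real (Re (g x)) - \<i> * complex_of_real (Im (g x)))"
    by (rule ext) (simp add: complex_eq_iff)
  also have "\<dots> \<in> borel_measurable M" by measurable
  finally show ?thesis .
qed

lemma L2_borel_measurable: "f \<in> L2 M \<Longrightarrow> f \<in> borel_measurable M" by (simp add: L2_def)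
lemma L2_integrable_square: "f \<in> L2 M \<Longrightarrow> integrable M (\<lambda>x. (cmod (f x))\<^sup>2)" by (simp add: L2_def)

lemma norm_add_square_le: "(cmod (a + b))\<^sup>2 \<le> 2 * (cmod a)\<^sup>2 + 2 * (cmod b)\<^sup>2"
proof -
  have "(cmod (a + b))\<^sup>2 \<le> (cmod a + cmod b)\<^sup>2" by (simp add: norm_triangle_ineq power_mono)
  also have "\<dots> \<le> 2 * (cmod a)\<^sup>2 + 2 * (cmod b)\<^sup>2"
  proof -
    have "0 \<le> (cmod a - cmod b)\<^sup>2" by simp
    then show ?thesis unfolding power2_diff power2_sum by linarith
  qed
  finally show ?thesis .
qed

lemma L2_add: assumes "f \<in> L2 M" "g \<in> L2 M" shows "(\<lambda>x. f x + g x) \<in> L2 M"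
proof -
  have [measurable]: "f \<in> borel_measurable M" "g \<in> borel_measurable M" using assms by (simp_all add: L2_borel_measurable)
  have m: "(\<lambda>x. f x + g x) \<in> borel_measurable M" by measurable
  have "integrable M (\<lambda>x. (cmod (f x + g x))\<^sup>2)"
  proof (rule Bochner_Integration.integrable_bound)
    show "integrable M (\<lambda>x. 2 * (cmod (f x))\<^sup>2 + 2 * (cmod (g x))\<^sup>2)"
      by (intro Bochner_Integration.integrable_add integrable_mult_right) (simp_all add: L2_integrable_square assms)
    show "(\<lambda>x. (cmod (f x + g x))\<^sup>2) \<in> borel_measurable M" by measurable
    have "norm ((cmod (f x + g x))\<^sup>2) \<le> norm (2 * (cmod (f x))\<^sup>2 + 2 * (cmod (g x))\<^sup>2)" for x
    proof -
      have "norm ((cmod (f x + g x))\<^sup>2) = (cmod (f x + g x))\<^sup>2" by simp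
      moreover have "norm (2 * (cmod (f x))\<^sup>2 + 2 * (cmod (g x))\<^sup>2) = 2 * (cmod (f x))\<^sup>2 + 2 * (cmod (g x))\<^sup>2"
        by simp
      ultimately show ?thesis using norm_add_square_le by simp
    qed
    then show "AE x in M. norm ((cmod (f x + g x))\<^sup>2) \<le> norm (2 * (cmod (f x))\<^sup>2 + 2 * (cmod (g x))\<^sup>2)"
      by (intro AE_I2)
  qed
  then show ?thesis using m by (simp add: L2_def)
qed

lemma L2_mult_left: assumes "f \<in> L2 M" shows "(\<lambda>x. a * f x) \<in> L2 M"
proof -
  have [measurable]: "f \<in> borel_measurable M" using assms by (simp_all add: L2_borel_measurable)
  have m: "(\<lambda>x. a * f x) \<in> borel_measurable M" by measurable
  have "integrable M (\<lambda>x. (cmod a)\<^sup>2 * (cmod (f x))\<^sup>2)"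
    by (intro integrable_mult_right) (simp add: L2_integrable_square assms)
  then have "integrable M (\<lambda>x. (cmod (a * f x))\<^sup>2)" by (simp add: norm_mult power_mult_distrib)
  then show ?thesis using m by (simp add: L2_def)
qed

lemma L2_uminus: assumes "f \<in> L2 M" shows "(\<lambda>x. - f x) \<in> L2 M"
  using L2_mult_left[OF assms, of "-1"] by simp

lemma L2_diff: assumes "f \<in> L2 M" "g \<in> L2 M" shows "(\<lambda>x. f x - g x) \<in> L2 M"
  using L2_add[OF assms(1) L2_uminus[OF assms(2)]] by simp

lemma L2_zero: "(\<lambda>x. 0) \<in> L2 M" by (simp add: L2_def)

lemma L2_sum: fixes N :: nat assumes "\<And>k. k < N \<Longrightarrow> F k \<in> L2 M" shows "(\<lambda>x. \<Sum>k<N. c k * F k x) \<in> L2 M"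
  using assms
proof (induction N)
  case 0 then show ?case by (simp add: L2_zero)
next
  case (Suc N)
  have "(\<lambda>x. (\<Sum>k<N. c k * F k x) + c N * F N x) \<in> L2 M"
    using Suc by (intro L2_add L2_mult_left) auto
  then show ?case by simp
qed

lemma integrable_L2inner_integrand: assumes "f \<in> L2 M" "g \<in> L2 M" shows "integrable M (\<lambda>x. f x * cnj (g x))"
proof (rule Bochner_Integration.integrable_bound)
  have [measurable]: "f \<in> borel_measurable M" "g \<in> borel_measurable M" using assms by (simp_all add: L2_borel_measurable)
  show "integrable M (\<lambda>x. (cmod (f x))\<^sup>2 + (cmod (g x))\<^sup>2)"
    by (intro Bochner_Integration.integrable_add) (simp_all add: L2_integrable_square assms)
  show "(\<lambda>x. f x * cnj (g x)) \<in> borel_measurable M" by measurable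
  have "cmod (a * cnj b) \<le> (cmod a)\<^sup>2 + (cmod b)\<^sup>2" for a b :: complex
  proof -
    have "cmod (a * cnj b) = cmod a * cmod b" by (simp add: norm_mult)
    also have "\<dots> \<le> (cmod a)\<^sup>2 + (cmod b)\<^sup>2"
    proof -
      have "0 \<le> (cmod a - cmod b)\<^sup>2" by simp
      moreover have "0 \<le> cmod a * cmod b" by simp
      ultimately show ?thesis unfolding power2_diff by linarith
    qed
    finally show ?thesis .
  qed
  then have "norm (f x * cnj (g x)) \<le> norm ((cmod (f x))\<^sup>2 + (cmod (g x))\<^sup>2)" for x
    by simp
  then show "AE x in M. norm (f x * cnj (g x)) \<le> norm ((cmod (f x))\<^sup>2 + (cmod (g x))\<^sup>2)"
    by (intro AE_I2)
qed

lemma mult_le_weighted_mean: fixes a b t :: real assumes "t > 0"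
  shows "a * b \<le> (t * a\<^sup>2 + b\<^sup>2 / t) / 2"
proof -
  have "0 \<le> (t * a - b)\<^sup>2" by simp
  then have "2 * t * (a * b) \<le> t\<^sup>2 * a\<^sup>2 + b\<^sup>2" by (simp add: power2_diff power_mult_distrib algebra_simps)
  then have "2 * t * (a * b) / t \<le> (t\<^sup>2 * a\<^sup>2 + b\<^sup>2) / t" using divide_right_mono[OF _ less_imp_le[OF assms]] by blast
  moreover have "2 * t * (a * b) / t = 2 * (a * b)" using assms by simp
  moreover have "(t\<^sup>2 * a\<^sup>2 + b\<^sup>2) / t = t * a\<^sup>2 + b\<^sup>2 / t" using assms
    by (simp add: add_divide_distrib power2_eq_square)
  ultimately show ?thesis by simp
qed

lemma L2_Cauchy_Schwarz: assumes f: "f \<in> L2 M" and g: "g \<in> L2 M"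
  shows "cmod (L2inner M f g) \<le> L2norm M f * L2norm M g"
proof -
  define A where "A = (\<integral>x. (cmod (f x))\<^sup>2 \<partial>M)"
  define B where "B = (\<integral>x. (cmod (g x))\<^sup>2 \<partial>M)"
  define I where "I = (\<integral>x. cmod (f x) * cmod (g x) \<partial>M)"
  have iA: "integrable M (\<lambda>x. (cmod (f x))\<^sup>2)" and iB: "integrable M (\<lambda>x. (cmod (g x))\<^sup>2)"
    using f g by (simp_all add: L2_integrable_square)
  have iI0: "integrable M (\<lambda>x. norm (f x * cnj (g x)))"
    using integrable_L2inner_integrand[OF f g] by (rule integrable_norm)
  have nn: "norm (f x * cnj (g x)) = cmod (f x) * cmod (g x)" for x by (simp add: norm_mult)
  have iI: "integrable M (\<lambda>x. cmod (f x) * cmod (g x))" using iI0 unfolding nn .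
  have A0: "A \<ge> 0" unfolding A_def by (rule integral_nonneg_AE) simp
  have B0: "B \<ge> 0" unfolding B_def by (rule integral_nonneg_AE) simp
  have "cmod (L2inner M f g) \<le> (\<integral>x. norm (f x * cnj (g x)) \<partial>M)"
    unfolding L2inner_def by (rule integral_norm_bound)
  also have "\<dots> = I" unfolding I_def nn ..
  also have "I \<le> sqrt A * sqrt B"
  proof (rule le_sqrt_mult_if_le_weighted_means[OF A0 B0])
    fix t :: real assume t: "t > 0"
    have "I \<le> (\<integral>x. (t * (cmod (f x))\<^sup>2 + (cmod (g x))\<^sup>2 / t) / 2 \<partial>M)"
      unfolding I_def
    proof (rule integral_mono[OF iI])
      show "integrable M (\<lambda>x. (t * (cmod (f x))\<^sup>2 + (cmod (g x))\<^sup>2 / t) / 2)"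
        using iA iB by (intro integrable_divide Bochner_Integration.integrable_add integrable_mult_right) auto
      show "cmod (f x) * cmod (g x) \<le> (t * (cmod (f x))\<^sup>2 + (cmod (g x))\<^sup>2 / t) / 2" for x
        by (rule mult_le_weighted_mean[OF t])
    qed
    also have "\<dots> = (t * A + B / t) / 2"
      unfolding A_def B_def using iA iB by simp
    finally show "I \<le> (t * A + B / t) / 2" .
  qed
  finally show ?thesis unfolding L2norm_def A_def B_def .
qed

lemma L2inner_sum_left:
  fixes N :: nat
  assumes F: "\<And>k. k < N \<Longrightarrow> F k \<in> L2 M" and g: "g \<in> L2 M"
  shows "L2inner M (\<lambda>x. \<Sum>k<N. c k * F k x) g = (\<Sum>k<N. c k * L2inner M (F k) g)"
proof -
  have i: "integrable M (\<lambda>x. c k * (F k x * cnj (g x)))" if "k \<in> {..<N}" for k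
    using integrable_L2inner_integrand[OF F g] that by auto
  have "L2inner M (\<lambda>x. \<Sum>k<N. c k * F k x) g = (\<integral>x. (\<Sum>k<N. c k * (F k x * cnj (g x))) \<partial>M)"
    unfolding L2inner_def by (simp add: sum_distrib_right mult.assoc)
  also have "\<dots> = (\<Sum>k<N. (\<integral>x. c k * (F k x * cnj (g x)) \<partial>M))"
    by (rule Bochner_Integration.integral_sum[OF i])
  also have "\<dots> = (\<Sum>k<N. c k * L2inner M (F k) g)"
    unfolding L2inner_def by (intro sum.cong refl integral_mult_right) (use integrable_L2inner_integrand[OF F g] in auto)
  finally show ?thesis .
qed

lemma L2inner_sum_right:
  fixes N :: nat
  assumes G: "\<And>k. k < N \<Longrightarrow> G k \<in> L2 M" and f: "f \<in> L2 M"
  shows "L2inner M f (\<lambda>x. \<Sum>k<N. c k * G k x) = (\<Sum>k<N. cnj (c k) * L2inner M f (G k))"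
proof -
  have i: "integrable M (\<lambda>x. cnj (c k) * (f x * cnj (G k x)))" if "k \<in> {..<N}" for k
    using integrable_L2inner_integrand[OF f G] that by auto
  have "L2inner M f (\<lambda>x. \<Sum>k<N. c k * G k x) = (\<integral>x. (\<Sum>k<N. cnj (c k) * (f x * cnj (G k x))) \<partial>M)"
    unfolding L2inner_def by (simp add: sum_distrib_left mult_ac)
  also have "\<dots> = (\<Sum>k<N. (\<integral>x. cnj (c k) * (f x * cnj (G k x)) \<partial>M))"
    by (rule Bochner_Integration.integral_sum[OF i])
  also have "\<dots> = (\<Sum>k<N. cnj (c k) * L2inner M f (G k))"
    unfolding L2inner_def by (intro sum.cong refl integral_mult_right) (use integrable_L2inner_integrand[OF f G] in auto)
  finally show ?thesis .
qed

lemma L2inner_diff_left: assumes "f \<in> L2 M" "h \<in> L2 M" "g \<in> L2 M"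
  shows "L2inner M (\<lambda>x. f x - h x) g = L2inner M f g - L2inner M h g"
  unfolding L2inner_def using integrable_L2inner_integrand[OF assms(1,3)] integrable_L2inner_integrand[OF assms(2,3)]
  by (simp add: left_diff_distrib)

lemma L2inner_diff_right: assumes "f \<in> L2 M" "h \<in> L2 M" "g \<in> L2 M"
  shows "L2inner M g (\<lambda>x. f x - h x) = L2inner M g f - L2inner M g h"
  unfolding L2inner_def using integrable_L2inner_integrand[OF assms(3,1)] integrable_L2inner_integrand[OF assms(3,2)]
  by (simp add: right_diff_distrib)

lemma L2_series_L2inner_left:
  assumes S: "L2_series M f \<alpha> F" and g: "g \<in> L2 M"
  shows "(\<lambda>N. \<Sum>k<N. \<alpha> k * L2inner M (F k) g) \<longlonglongrightarrow> L2inner M f g"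
proof -
  have f: "f \<in> L2 M" and F: "\<And>k. F k \<in> L2 M"
    and conv: "(\<lambda>N. L2norm M (\<lambda>x. f x - (\<Sum>k<N. \<alpha> k * F k x))) \<longlonglongrightarrow> 0"
    using S by (auto simp: L2_series_def)
  have SN: "(\<lambda>x. \<Sum>k<N. \<alpha> k * F k x) \<in> L2 M" for N by (rule L2_sum) (rule F)
  have eq: "L2inner M f g - (\<Sum>k<N. \<alpha> k * L2inner M (F k) g) = L2inner M (\<lambda>x. f x - (\<Sum>k<N. \<alpha> k * F k x)) g" for N
    using L2inner_diff_left[OF f SN[of N] g] L2inner_sum_left[where N=N and c=\<alpha>, OF F g] by simp
  have "(\<lambda>N. L2inner M f g - (\<Sum>k<N. \<alpha> k * L2inner M (F k) g)) \<longlonglongrightarrow> 0"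
  proof (rule Lim_null_comparison)
    show "\<forall>\<^sub>F N in sequentially. norm (L2inner M f g - (\<Sum>k<N. \<alpha> k * L2inner M (F k) g))
           \<le> L2norm M (\<lambda>x. f x - (\<Sum>k<N. \<alpha> k * F k x)) * L2norm M g"
      unfolding eq using L2_Cauchy_Schwarz[OF L2_diff[OF f SN] g] by simp
    show "(\<lambda>N. L2norm M (\<lambda>x. f x - (\<Sum>k<N. \<alpha> k * F k x)) * L2norm M g) \<longlonglongrightarrow> 0"
      using tendsto_mult_left_zero[OF conv] by simp
  qed
  from tendsto_minus[OF this] have "(\<lambda>N. (\<Sum>k<N. \<alpha> k * L2inner M (F k) g) - L2inner M f g) \<longlonglongrightarrow> 0"
    by simp
  then show ?thesis by (rule LIM_zero_cancel)
qed

lemma L2_series_L2inner_right: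
  assumes S: "L2_series M g \<beta> G" and f: "f \<in> L2 M"
  shows "(\<lambda>N. \<Sum>k<N. cnj (\<beta> k) * L2inner M f (G k)) \<longlonglongrightarrow> L2inner M f g"
proof -
  have g: "g \<in> L2 M" and G: "\<And>k. G k \<in> L2 M"
    and conv: "(\<lambda>N. L2norm M (\<lambda>x. g x - (\<Sum>k<N. \<beta> k * G k x))) \<longlonglongrightarrow> 0"
    using S by (auto simp: L2_series_def)
  have SN: "(\<lambda>x. \<Sum>k<N. \<beta> k * G k x) \<in> L2 M" for N by (rule L2_sum) (rule G)
  have eq: "L2inner M f g - (\<Sum>k<N. cnj (\<beta> k) * L2inner M f (G k)) = L2inner M f (\<lambda>x. g x - (\<Sum>k<N. \<beta> k * G k x))" for N
    using L2inner_diff_right[OF g SN[of N] f] L2inner_sum_right[where N=N and c=\<beta>, OF G f] by simp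
  have "(\<lambda>N. L2inner M f g - (\<Sum>k<N. cnj (\<beta> k) * L2inner M f (G k))) \<longlonglongrightarrow> 0"
  proof (rule Lim_null_comparison)
    show "\<forall>\<^sub>F N in sequentially. norm (L2inner M f g - (\<Sum>k<N. cnj (\<beta> k) * L2inner M f (G k)))
           \<le> L2norm M f * L2norm M (\<lambda>x. g x - (\<Sum>k<N. \<beta> k * G k x))"
      unfolding eq using L2_Cauchy_Schwarz[OF f L2_diff[OF g SN]] by simp
    show "(\<lambda>N. L2norm M f * L2norm M (\<lambda>x. g x - (\<Sum>k<N. \<beta> k * G k x))) \<longlonglongrightarrow> 0"
      using tendsto_mult_right_zero[OF conv] by simp
  qed
  from tendsto_minus[OF this] have "(\<lambda>N. (\<Sum>k<N. cnj (\<beta> k) * L2inner M f (G k)) - L2inner M f g) \<longlonglongrightarrow> 0"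
    by simp
  then show ?thesis by (rule LIM_zero_cancel)
qed

section \<open>Biorthogonality of wavelet packets\<close>

context haar_local_field
begin

lemma borel_measurable_translate_comp:
  "f \<in> borel_measurable M \<Longrightarrow> (\<lambda>x. f (x - w)) \<in> borel_measurable M"
  using measurable_compose[OF measurable_translate[of "- w"]] by simp

lemma L2_translate:
  assumes "f \<in> L2 M" shows "(\<lambda>x. f (x - w)) \<in> L2 M"
proof -
  have f: "f \<in> borel_measurable M" using assms by (rule L2_borel_measurable)
  have "(\<lambda>x. (cmod (f x))\<^sup>2) \<in> borel_measurable M" using f by measurable
  from integrable_translate_iff[OF this, of "- w"]
  have "integrable M (\<lambda>x. (cmod (f (x - w)))\<^sup>2)" using L2_integrable_square[OF assms] by simp
  then show ?thesis using borel_measurable_translate_comp[OF f] by (simp add: L2_def)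
qed

lemma L2norm_translate:
  assumes "f \<in> borel_measurable M" shows "L2norm M (\<lambda>x. f (x - w)) = L2norm M f"
proof -
  have "(\<lambda>x. (cmod (f x))\<^sup>2) \<in> borel_measurable M" using assms by measurable
  then show ?thesis unfolding L2norm_def using integral_translate[of _ "- w"] by simp
qed

lemma L2_series_translate:
  assumes "L2_series M g \<beta> G"
  shows "L2_series M (\<lambda>x. g (x - w)) \<beta> (\<lambda>k x. G k (x - w))"
proof -
  have g: "g \<in> L2 M" and G: "\<And>k. G k \<in> L2 M"
    and conv: "(\<lambda>N. L2norm M (\<lambda>x. g x - (\<Sum>k<N. \<beta> k * G k x))) \<longlonglongrightarrow> 0"
    using assms by (auto simp: L2_series_def)
  have "L2norm M (\<lambda>x. g (x - w) - (\<Sum>k<N. \<beta> k * G k (x - w))) = L2norm M (\<lambda>x. g x - (\<Sum>k<N. \<beta> k * G k x))"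
    for N
    using L2norm_translate[OF L2_borel_measurable[OF L2_diff[OF g L2_sum[OF G]]]] by simp
  then show ?thesis using conv g G L2_translate unfolding L2_series_def by simp
qed

lemma L2inner_dilate:
  assumes F: "F \<in> L2 M" and G: "G \<in> L2 M"
  shows "L2inner M (\<lambda>x. F (inverse pr * x - a)) (\<lambda>x. G (inverse pr * x - b))
       = complex_of_real (1 / real residue_card) * L2inner M F (\<lambda>x. G (x - (b - a)))"
proof -
  have [measurable]: "F \<in> borel_measurable M" "G \<in> borel_measurable M"
    "(\<lambda>y. F (y - a)) \<in> borel_measurable M" "(\<lambda>y. G (y - b)) \<in> borel_measurable M"
    using F G by (simp_all add: L2_borel_measurable borel_measurable_translate_comp)
  define h where "h y = F (y - a) * cnj (G (y - b))" for y
  have h: "h \<in> borel_measurable M" unfolding h_def by measurable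
  have "L2inner M (\<lambda>x. F (inverse pr * x - a)) (\<lambda>x. G (inverse pr * x - b))
      = complex_of_real (1 / real residue_card) * integral\<^sup>L M h"
    unfolding L2inner_def h_def[symmetric] by (rule integral_dilate[OF h])
  also have "integral\<^sup>L M h = (\<integral>y. h (y + a) \<partial>M)" by (rule integral_translate[OF h, symmetric])
  also have "\<dots> = L2inner M F (\<lambda>x. G (x - (b - a)))"
    unfolding h_def L2inner_def by (simp add: algebra_simps)
  finally show ?thesis .
qed

lemma L2inner_translate_conj:
  assumes f: "f \<in> borel_measurable M" and g: "g \<in> borel_measurable M"
  shows "L2inner M f (\<lambda>x. g (x - w)) = cnj (L2inner M g (\<lambda>x. f (x + w)))"
proof -
  have "(\<lambda>x. f x * cnj (g (x - w))) \<in> borel_measurable M"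
    using f borel_measurable_translate_comp[OF g, of w] by measurable
  then have "L2inner M f (\<lambda>x. g (x - w)) = (\<integral>x. f (x + w) * cnj (g (x + w - w)) \<partial>M)"
    unfolding L2inner_def by (rule integral_translate[symmetric])
  also have "\<dots> = (\<integral>x. cnj (g x * cnj (f (x + w))) \<partial>M)" by (simp add: mult.commute)
  also have "\<dots> = cnj (L2inner M g (\<lambda>x. f (x + w)))" unfolding L2inner_def by (rule Bochner_Integration.integral_cnj)
  finally show ?thesis .
qed

text \<open>The two-scale expansion of \<open>\<langle>f, g(\<cdot> - w)\<rangle>\<close> proved in \<open>L2inner_refinement\<close>;
  \<open>1 / residue_card\<close> is the factor by which the dilation rescales Haar measure.\<close>

definition refinement_pairing :: "(nat \<Rightarrow> complex) \<Rightarrow> (nat \<Rightarrow> complex) \<Rightarrow> 'k \<Rightarrow> ('k \<Rightarrow> complex) \<Rightarrow> complex"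
  where "refinement_pairing \<alpha> \<beta> w h =
    lim (\<lambda>N. \<Sum>j<N. \<alpha> j * lim (\<lambda>N'. \<Sum>j'<N'. cnj (\<beta> j') *
      (complex_of_real (1 / real residue_card) * h (u j' + inverse pr * w - u j))))"

lemma L2inner_refinement:
  assumes f: "L2_series M f \<alpha> (dil_shift pr u F)" and g: "L2_series M g \<beta> (dil_shift pr u G)"
    and F: "F \<in> L2 M" and G: "G \<in> L2 M"
  shows "L2inner M f (\<lambda>x. g (x - w)) = refinement_pairing \<alpha> \<beta> w (\<lambda>v. L2inner M F (\<lambda>x. G (x - v)))"
proof -
  have Fj: "dil_shift pr u F j \<in> L2 M" for j using f by (simp add: L2_series_def)
  have inner_terms: "L2inner M (dil_shift pr u F j) (\<lambda>x. dil_shift pr u G j' (x - w))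
      = complex_of_real (1 / real residue_card) * L2inner M F (\<lambda>x. G (x - (u j' + inverse pr * w - u j)))"
    for j j'
  proof -
    have "(\<lambda>x. dil_shift pr u G j' (x - w)) = (\<lambda>x. G (inverse pr * x - (u j' + inverse pr * w)))"
      unfolding dil_shift_def by (rule ext) (simp add: algebra_simps)
    then show ?thesis
      using L2inner_dilate[OF F G, of "u j" "u j' + inverse pr * w"] unfolding dil_shift_def
      by (simp add: algebra_simps)
  qed
  have inner: "(\<lambda>N'. \<Sum>j'<N'. cnj (\<beta> j') *
       (complex_of_real (1 / real residue_card) * L2inner M F (\<lambda>x. G (x - (u j' + inverse pr * w - u j)))))
      \<longlonglongrightarrow> L2inner M (dil_shift pr u F j) (\<lambda>x. g (x - w))" for j
    using L2_series_L2inner_right[OF L2_series_translate[OF g, of w] Fj[of j]] unfolding inner_terms .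
  have outer: "(\<lambda>N. \<Sum>j<N. \<alpha> j * L2inner M (dil_shift pr u F j) (\<lambda>x. g (x - w)))
      \<longlonglongrightarrow> L2inner M f (\<lambda>x. g (x - w))"
    using g by (intro L2_series_L2inner_left[OF f] L2_translate) (simp add: L2_series_def)
  show ?thesis
    unfolding refinement_pairing_def limI[OF inner] by (rule limI[OF outer, symmetric])
qed

lemma refinement_pairing_cong:
  assumes "\<And>m. h1 (u m) = h2 (u m)"
  shows "refinement_pairing \<alpha> \<beta> (u k) h1 = refinement_pairing \<alpha> \<beta> (u k) h2"
proof -
  have "h1 (u j' + inverse pr * u k - u j) = h2 (u j' + inverse pr * u k - u j)" for j j'
    using uK_add_dilate_diff[of zeta j' k j] assms by metis
  then show ?thesis unfolding refinement_pairing_def by simp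
qed

lemma refinement_pairing_0: "refinement_pairing \<alpha> \<beta> w (\<lambda>_. 0) = 0"
  unfolding refinement_pairing_def by (simp add: limI)

lemma biorthogonal_by_two_scale_recursion:
  fixes T :: "nat \<Rightarrow> nat \<Rightarrow> 'k \<Rightarrow> complex" and \<alpha> \<beta> :: "nat \<Rightarrow> nat \<Rightarrow> complex"
  assumes rec: "\<And>l n w. T l n w =
      refinement_pairing (\<alpha> (l mod p ^ c)) (\<beta> (n mod p ^ c)) w (T (l div p ^ c) (n div p ^ c))"
    and base: "\<And>s s' k. s < p ^ c \<Longrightarrow> s' < p ^ c \<Longrightarrow> T s s' (u k) = (if s = s' \<and> k = 0 then 1 else 0)"
  shows "T l n (u k) = (if l = n \<and> k = 0 then 1 else 0)"
proof (induction "l + n" arbitrary: l n k rule: less_induct)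
  case less
  define r r' s s' where "r = l div p ^ c" and "r' = n div p ^ c" and "s = l mod p ^ c" and "s' = n mod p ^ c"
  have Q_pos: "p ^ c > 0" using p_power_c_ge_2 by linarith
  then have s: "s < p ^ c" "s' < p ^ c" by (simp_all add: s_def s'_def)
  have digits: "l = p ^ c * r + s" "n = p ^ c * r' + s'" by (simp_all add: r_def s_def r'_def s'_def)
  have scale: "2 * r \<le> p ^ c * r" "2 * r' \<le> p ^ c * r'" using p_power_c_ge_2 by simp_all
  have lt: "r < l" if "r > 0" using digits scale that by linarith
  have lt': "r' < n" if "r' > 0" using digits scale that by linarith
  have "T l n (u k) = refinement_pairing (\<alpha> s) (\<beta> s') (u k) (T r r')"
    unfolding r_def r'_def s_def s'_def by (rule rec)
  also have "\<dots> = (if l = n \<and> k = 0 then 1 else 0)"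
  proof (cases "r = r'")
    case True
    have "T r r (u m) = T 0 0 (u m)" for m
      using less(1)[of r r m] base[OF Q_pos Q_pos, of m] lt lt' True by (cases "r = 0") auto
    then have "refinement_pairing (\<alpha> s) (\<beta> s') (u k) (T r r') = refinement_pairing (\<alpha> s) (\<beta> s') (u k) (T 0 0)"
      using True by (intro refinement_pairing_cong) simp
    also have "\<dots> = T s s' (u k)" using rec[of s s' "u k"] s by simp
    also have "\<dots> = (if l = n \<and> k = 0 then 1 else 0)" using base[OF s] digits True by auto
    finally show ?thesis .
  next
    case False
    have "T r r' (u m) = 0" for m
      using less(1)[of r r' m] lt lt' False digits by (cases "r = 0"; cases "r' = 0") auto
    then have "refinement_pairing (\<alpha> s) (\<beta> s') (u k) (T r r') = 0"
      using refinement_pairing_cong[of "T r r'" "\<lambda>_. 0"] refinement_pairing_0 by simp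
    moreover have "l \<noteq> n" using False by (auto simp: r_def r'_def)
    ultimately show ?thesis by simp
  qed
  finally show ?case .
qed

lemma biorthogonal_generators:
  fixes phi phit :: "'k \<Rightarrow> complex" and psi psit :: "nat \<Rightarrow> 'k \<Rightarrow> complex"
  assumes phit: "phit \<in> L2 M" and psi: "\<forall>l\<in>{1..<p ^ c}. psi l \<in> L2 M"
    and bi1: "\<forall>k. L2inner M phi (\<lambda>x. phit (x - u k)) = (if k = 0 then 1 else 0)"
    and bi2: "\<forall>k. \<forall>l\<in>{1..<p ^ c}. L2inner M phi (\<lambda>x. psit l (x - u k)) = 0"
    and bi3: "\<forall>k. \<forall>l\<in>{1..<p ^ c}. L2inner M phit (\<lambda>x. psi l (x - u k)) = 0"
    and bi4: "\<forall>k. \<forall>l\<in>{1..<p ^ c}. \<forall>l'\<in>{1..<p ^ c}.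
      L2inner M (psi l) (\<lambda>x. psit l' (x - u k)) = (if l = l' \<and> k = 0 then 1 else 0)"
    and s: "s < p ^ c" "s' < p ^ c"
  shows "L2inner M (if s = 0 then phi else psi s) (\<lambda>x. (if s' = 0 then phit else psit s') (x - u k))
    = (if s = s' \<and> k = 0 then 1 else 0)"
proof -
  have s_range: "s \<in> {1..<p ^ c}" if "s \<noteq> 0" using s that by auto
  have s'_range: "s' \<in> {1..<p ^ c}" if "s' \<noteq> 0" using s that by auto
  consider "s = 0" "s' = 0" | "s = 0" "s' \<noteq> 0" | "s \<noteq> 0" "s' = 0" | "s \<noteq> 0" "s' \<noteq> 0"
    by blast
  then show ?thesis
  proof cases
    case 1
    have "L2inner M phi (\<lambda>x. phit (x - u k)) = (if k = 0 then 1 else 0)" using bi1 by blast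
    then show ?thesis using 1 by simp
  next
    case 2
    then have "L2inner M phi (\<lambda>x. psit s' (x - u k)) = 0" using bi2 s'_range by blast
    then show ?thesis using 2 by simp
  next
    case 3
    obtain m where m: "u m = - u k" using uK_uminus by blast
    have "L2inner M (psi s) (\<lambda>x. phit (x - u k)) = cnj (L2inner M phit (\<lambda>x. psi s (x - u m)))"
      using L2inner_translate_conj[OF L2_borel_measurable L2_borel_measurable] phit psi s_range 3 m by simp
    also have "L2inner M phit (\<lambda>x. psi s (x - u m)) = 0" using bi3 s_range 3 by blast
    finally show ?thesis using 3 by simp
  next
    case 4
    then have "L2inner M (psi s) (\<lambda>x. psit s' (x - u k)) = (if s = s' \<and> k = 0 then 1 else 0)"
      using bi4 s_range s'_range by blast
    then show ?thesis using 4 by simp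
  qed
qed

end

theorem theorem3p4:
  fixes absv :: "'k::field \<Rightarrow> real" and p c :: nat and pr :: 'k and zeta :: "nat \<Rightarrow> 'k"
    and M :: "'k measure"
    and phi phit :: "'k \<Rightarrow> complex" and psi psit :: "nat \<Rightarrow> 'k \<Rightarrow> complex"
    and a atil :: "nat \<Rightarrow> nat \<Rightarrow> complex"
    and V :: "int \<Rightarrow> ('k \<Rightarrow> complex) set" and W :: "('k \<Rightarrow> complex) set"
    and omega omegat :: "nat \<Rightarrow> 'k \<Rightarrow> complex"
  assumes K: "local_field_pc absv p"
    and pr: "prime_element absv (p ^ c) pr"
    and zeta: "residue_basis absv p c zeta"
    and haar: "haar_normalized absv M"
    and coeff_l2: "\<forall>s<p ^ c. summable (\<lambda>k. (cmod (a s k))\<^sup>2) \<and> summable (\<lambda>k. (cmod (atil s k))\<^sup>2)"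
    and ref_phi: "L2_series M phi (\<lambda>k. complex_of_real (sqrt (real (p ^ c))) * a 0 k)
                    (dil_shift pr (uK pr zeta p c) phi)"
    and ref_phit: "L2_series M phit (\<lambda>k. complex_of_real (sqrt (real (p ^ c))) * atil 0 k)
                    (dil_shift pr (uK pr zeta p c) phit)"
    and ref_psi: "\<forall>l\<in>{1..<p ^ c}. L2_series M (psi l) (\<lambda>k. complex_of_real (sqrt (real (p ^ c))) * a l k)
                    (dil_shift pr (uK pr zeta p c) phi)"
    and ref_psit: "\<forall>l\<in>{1..<p ^ c}. L2_series M (psit l) (\<lambda>k. complex_of_real (sqrt (real (p ^ c))) * atil l k)
                    (dil_shift pr (uK pr zeta p c) phit)"
    and mra: "mra M pr (uK pr zeta p c) V phi"
    and compl: "direct_complement M W (V 0) (V 1)"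
    and riesz: "riesz_basis M W ({1..<p ^ c} \<times> UNIV) (\<lambda>(l, k) x. psi l (x - uK pr zeta p c k))"
    and bi1: "\<forall>k. L2inner M phi (\<lambda>x. phit (x - uK pr zeta p c k)) = (if k = 0 then 1 else 0)"
    and bi2: "\<forall>k. \<forall>l\<in>{1..<p ^ c}. L2inner M phi (\<lambda>x. psit l (x - uK pr zeta p c k)) = 0"
    and bi3: "\<forall>k. \<forall>l\<in>{1..<p ^ c}. L2inner M phit (\<lambda>x. psi l (x - uK pr zeta p c k)) = 0"
    and bi4: "\<forall>k. \<forall>l\<in>{1..<p ^ c}. \<forall>l'\<in>{1..<p ^ c}.
                L2inner M (psi l) (\<lambda>x. psit l' (x - uK pr zeta p c k)) = (if l = l' \<and> k = 0 then 1 else 0)"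
    and om0: "omega 0 = phi" and omt0: "omegat 0 = phit"
    and om: "\<forall>n. L2_series M (omega n) (\<lambda>k. complex_of_real (sqrt (real (p ^ c))) * a (n mod p ^ c) k)
                 (dil_shift pr (uK pr zeta p c) (omega (n div p ^ c)))"
    and omt: "\<forall>n. L2_series M (omegat n) (\<lambda>k. complex_of_real (sqrt (real (p ^ c))) * atil (n mod p ^ c) k)
                 (dil_shift pr (uK pr zeta p c) (omegat (n div p ^ c)))"
  shows "\<forall>l n k. L2inner M (omega l) (\<lambda>x. omegat n (x - uK pr zeta p c k))
           = (if l = n \<and> k = 0 then 1 else 0)"
proof -
  interpret haar_local_field absv p c pr zeta M by unfold_locales fact+
  define \<alpha> \<beta> where "\<alpha> s = (\<lambda>k. complex_of_real (sqrt (real (p ^ c))) * a s k)"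
    and "\<beta> s = (\<lambda>k. complex_of_real (sqrt (real (p ^ c))) * atil s k)" for s
  define T where "T l n = (\<lambda>v. L2inner M (omega l) (\<lambda>x. omegat n (x - v)))" for l n
  have L2: "omega n \<in> L2 M" "omegat n \<in> L2 M" for n
    using om omt by (auto simp: L2_series_def)
  have rec: "T l n w = refinement_pairing (\<alpha> (l mod p ^ c)) (\<beta> (n mod p ^ c)) w (T (l div p ^ c) (n div p ^ c))"
    for l n w
    unfolding T_def \<alpha>_def \<beta>_def using om omt L2 by (intro L2inner_refinement) auto
  have base: "T s s' (u k) = (if s = s' \<and> k = 0 then 1 else 0)" if s: "s < p ^ c" "s' < p ^ c" for s s' k
  proof -
    have "L2_series M (if s = 0 then phi else psi s) (\<alpha> s) (dil_shift pr u phi)"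
      and "L2_series M (if s' = 0 then phit else psit s') (\<beta> s') (dil_shift pr u phit)"
      using ref_phi ref_phit ref_psi ref_psit s by (auto simp: \<alpha>_def \<beta>_def)
    from L2inner_refinement[OF this, of "u k"]
    have "T s s' (u k) = L2inner M (if s = 0 then phi else psi s) (\<lambda>x. (if s' = 0 then phit else psit s') (x - u k))"
      using rec[of s s' "u k"] L2[of 0] s by (simp add: T_def om0 omt0)
    also have "\<dots> = (if s = s' \<and> k = 0 then 1 else 0)"
      using L2[of 0] ref_psi s by (intro biorthogonal_generators bi1 bi2 bi3 bi4) (auto simp: omt0 L2_series_def)
    finally show ?thesis .
  qed
  show ?thesis using biorthogonal_by_two_scale_recursion[OF rec base] unfolding T_def by blast
qed

end
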